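(* The manifold $\mathcal M_F$ is locally symmetric (i.e. $\nabla R\equiv0$) if and only if, for each $i$ with $1\le i\le k$ and every $u\in\mathbb R$, either $f_i(u)=0$ or $f_i'(u)=-\tfrac12$.
   Context: Fix an integer $k\ge 1$ and signs $\varepsilon_1,\dots,\varepsilon_k\in\{\pm1\}$. Let $f_1,\dots,f_k:\mathbb R\to\mathbb R$ be smooth, $F=(f_1,\dots,f_k)$. On $\mathbb R^{3k+2}$ with coordinates $(u_0,\dots,u_k,v_0,\dots,v_k,s_1,\dots,s_k)$ let $g_F$ be the symmetric metric whose only nonzero components on coordinate vector fields are (up to symmetry), for $1\le i\le k$ and $0\le i',j\le k$: $g_F(\partial_{u_0},\partial_{u_i})=2f_i(u_i)s_i$, $g_F(\partial_{u_i},\partial_{u_i})=-2u_0s_i$, $g_F(\partial_{u_{i'}},\partial_{v_j})=\delta_{i'j}$, $g_F(\partial_{s_i},\partial_{s_i})=\varepsilon_i$; $\mathcal M_F=(\mathbb R^{3k+2},g_F)$, with Levi-Civita connection $\nabla$ and curvature tensor $R(X,Y,Z,W)=g_F(\nabla_X\nabla_YZ-\nabla_Y\nabla_XZ-\nabla_{[X,Y]}Z,W)$. *)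

theory Defs
  imports "HOL-Analysis.Derivative"
begin

text \<open>Coordinates on R^N are indexed by 0..<N; a point is a function nat => real
(only the first N entries matter).  A (pseudo-)Riemannian metric in coordinates is
a function g x a b giving g(\<partial>_a,\<partial>_b) at the point x.\<close>

definition smooth_fun :: "(real \<Rightarrow> real) \<Rightarrow> bool" where
  "smooth_fun h \<longleftrightarrow> (\<forall>n x. ((deriv :: (real \<Rightarrow> real) \<Rightarrow> real \<Rightarrow> real) ^^ n) h differentiable (at x))"

definition pd :: "nat \<Rightarrow> ((nat \<Rightarrow> real) \<Rightarrow> real) \<Rightarrow> (nat \<Rightarrow> real) \<Rightarrow> real" where
  "pd a h x = deriv (\<lambda>t. h (x(a := t))) (x a)"

definition inv_metric :: "nat \<Rightarrow> ((nat \<Rightarrow> real) \<Rightarrow> nat \<Rightarrow> nat \<Rightarrow> real)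
    \<Rightarrow> (nat \<Rightarrow> real) \<Rightarrow> nat \<Rightarrow> nat \<Rightarrow> real" where
  "inv_metric N g x = (THE h. (\<forall>a<N. \<forall>c<N. (\<Sum>b<N. g x a b * h b c) = (if a = c then 1 else 0))
                           \<and> (\<forall>a b. (N \<le> a \<or> N \<le> b) \<longrightarrow> h a b = 0))"

text \<open>Christoffel symbols of the Levi-Civita connection:
  \<nabla>_{\<partial>_a} \<partial>_b = \<Sum>_c christoffel N g x c a b \<partial>_c.\<close>
definition christoffel :: "nat \<Rightarrow> ((nat \<Rightarrow> real) \<Rightarrow> nat \<Rightarrow> nat \<Rightarrow> real)
    \<Rightarrow> (nat \<Rightarrow> real) \<Rightarrow> nat \<Rightarrow> nat \<Rightarrow> nat \<Rightarrow> real" where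
  "christoffel N g x c a b =
     (\<Sum>d<N. inv_metric N g x c d *
        (pd a (\<lambda>y. g y b d) x + pd b (\<lambda>y. g y a d) x - pd d (\<lambda>y. g y a b) x)) / 2"

text \<open>Components of R(\<partial>_a,\<partial>_b)\<partial>_c = \<nabla>_a\<nabla>_b\<partial>_c - \<nabla>_b\<nabla>_a\<partial>_c
  (coordinate fields commute) along \<partial>_f.\<close>
definition curv_up :: "nat \<Rightarrow> ((nat \<Rightarrow> real) \<Rightarrow> nat \<Rightarrow> nat \<Rightarrow> real)
    \<Rightarrow> (nat \<Rightarrow> real) \<Rightarrow> nat \<Rightarrow> nat \<Rightarrow> nat \<Rightarrow> nat \<Rightarrow> real" where
  "curv_up N g x a b c f =
     pd a (\<lambda>y. christoffel N g y f b c) x - pd b (\<lambda>y. christoffel N g y f a c) x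
     + (\<Sum>e<N. christoffel N g x e b c * christoffel N g x f a e
               - christoffel N g x e a c * christoffel N g x f b e)"

text \<open>R(\<partial>_a,\<partial>_b,\<partial>_c,\<partial>_d) = g(R(\<partial>_a,\<partial>_b)\<partial>_c, \<partial>_d).\<close>
definition curv :: "nat \<Rightarrow> ((nat \<Rightarrow> real) \<Rightarrow> nat \<Rightarrow> nat \<Rightarrow> real)
    \<Rightarrow> (nat \<Rightarrow> real) \<Rightarrow> nat \<Rightarrow> nat \<Rightarrow> nat \<Rightarrow> nat \<Rightarrow> real" where
  "curv N g x a b c d = (\<Sum>f<N. curv_up N g x a b c f * g x f d)"

definition nabla_curv :: "nat \<Rightarrow> ((nat \<Rightarrow> real) \<Rightarrow> nat \<Rightarrow> nat \<Rightarrow> real)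
    \<Rightarrow> (nat \<Rightarrow> real) \<Rightarrow> nat \<Rightarrow> nat \<Rightarrow> nat \<Rightarrow> nat \<Rightarrow> nat \<Rightarrow> real" where
  "nabla_curv N g x e a b c d =
     pd e (\<lambda>y. curv N g y a b c d) x
     - (\<Sum>h<N. christoffel N g x h e a * curv N g x h b c d
             + christoffel N g x h e b * curv N g x a h c d
             + christoffel N g x h e c * curv N g x a b h d
             + christoffel N g x h e d * curv N g x a b c h)"

definition locally_symmetric :: "nat \<Rightarrow> ((nat \<Rightarrow> real) \<Rightarrow> nat \<Rightarrow> nat \<Rightarrow> real) \<Rightarrow> bool" where
  "locally_symmetric N g \<longleftrightarrow>
     (\<forall>x e a b c d. e < N \<and> a < N \<and> b < N \<and> c < N \<and> d < N \<longrightarrow> nabla_curv N g x e a b c d = 0)"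

text \<open>Coordinate indices: u_i = i (0 \<le> i \<le> k), v_j = k+1+j (0 \<le> j \<le> k),
  s_i = 2k+1+i (1 \<le> i \<le> k); total dimension 3k+2.\<close>
definition uidx :: "nat \<Rightarrow> nat \<Rightarrow> nat" where "uidx k i = i"
definition vidx :: "nat \<Rightarrow> nat \<Rightarrow> nat" where "vidx k j = k + 1 + j"
definition sidx :: "nat \<Rightarrow> nat \<Rightarrow> nat" where "sidx k i = 2 * k + 1 + i"

definition gF :: "nat \<Rightarrow> (nat \<Rightarrow> real) \<Rightarrow> (nat \<Rightarrow> real \<Rightarrow> real)
    \<Rightarrow> (nat \<Rightarrow> real) \<Rightarrow> nat \<Rightarrow> nat \<Rightarrow> real" where
  "gF k eps f x a b =
     (if a = uidx k 0 \<and> 1 \<le> b \<and> b \<le> k then 2 * f b (x (uidx k b)) * x (sidx k b)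
      else if b = uidx k 0 \<and> 1 \<le> a \<and> a \<le> k then 2 * f a (x (uidx k a)) * x (sidx k a)
      else if a = b \<and> 1 \<le> a \<and> a \<le> k then - 2 * x (uidx k 0) * x (sidx k a)
      else if a \<le> k \<and> b = vidx k a then 1
      else if b \<le> k \<and> a = vidx k b then 1
      else if a = b \<and> 2 * k + 2 \<le> a \<and> a \<le> 3 * k + 1 then eps (a - (2 * k + 1))
      else 0)"

end

theory Submission
  imports Defs
begin

text \<open>In the coordinates \<open>(u, v, s)\<close> the inverse metric is explicit, so the Christoffel
  symbols, the curvature and its covariant derivative can all be computed in closed form.  The only
  surviving components of \<open>\<nabla>R\<close> are those along \<open>\<partial>\<^sub>u\<^sub>i\<close>, \<open>i \<ge> 1\<close>:
  \<open>\<nabla>\<^sub>u\<^sub>iR = -2 \<epsilon>\<^sub>i f\<^sub>i (1 + 2 f\<^sub>i') \<omega>\<^sub>i \<otimes> \<omega>\<^sub>i + f\<^sub>i'' (\<omega>\<^sub>i \<otimes> \<eta>\<^sub>i + \<eta>\<^sub>i \<otimes> \<omega>\<^sub>i)\<close>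
  with \<open>\<omega>\<^sub>i = du\<^sub>0 \<and> du\<^sub>i\<close> and \<open>\<eta>\<^sub>i = du\<^sub>i \<and> ds\<^sub>i\<close>.  So \<open>\<nabla>R = 0\<close> iff
  \<open>f\<^sub>i (1 + 2 f\<^sub>i') = 0\<close> and \<open>f\<^sub>i'' = 0\<close>.  The second condition follows from the first:
  differentiating \<open>f\<^sub>i (1 + 2 f\<^sub>i') = 0\<close> at a zero of \<open>f\<^sub>i\<close> shows that the continuous
  function \<open>f\<^sub>i'\<close> only takes the values \<open>0\<close> and \<open>-1/2\<close>, hence is constant.\<close>

definition partially_differentiable :: "nat \<Rightarrow> ((nat \<Rightarrow> real) \<Rightarrow> real) \<Rightarrow> (nat \<Rightarrow> real) \<Rightarrow> bool" where
  "partially_differentiable a h x \<longleftrightarrow> (\<lambda>t. h (x(a := t))) field_differentiable (at (x a))"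

lemma has_field_derivative_pd:
  "partially_differentiable a h x \<Longrightarrow> ((\<lambda>t. h (x(a := t))) has_field_derivative pd a h x) (at (x a))"
  unfolding partially_differentiable_def pd_def using DERIV_deriv_iff_field_differentiable by blast

lemma partially_differentiableI:
  "((\<lambda>t. h (x(a := t))) has_field_derivative D) (at (x a)) \<Longrightarrow> partially_differentiable a h x"
  unfolding partially_differentiable_def field_differentiable_def by blast

lemma pd_eqI: "((\<lambda>t. h (x(a := t))) has_field_derivative D) (at (x a)) \<Longrightarrow> pd a h x = D"
  unfolding pd_def by (rule DERIV_imp_deriv)

lemma partially_differentiable_add [simp]:
  "partially_differentiable a g x \<Longrightarrow> partially_differentiable a h x \<Longrightarrow>
   partially_differentiable a (\<lambda>y. g y + h y) x"
  by (rule partially_differentiableI, rule DERIV_add; rule has_field_derivative_pd)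

lemma pd_add [simp]:
  "partially_differentiable a g x \<Longrightarrow> partially_differentiable a h x \<Longrightarrow>
   pd a (\<lambda>y. g y + h y) x = pd a g x + pd a h x"
  by (rule pd_eqI, rule DERIV_add; rule has_field_derivative_pd)

lemma partially_differentiable_diff [simp]:
  "partially_differentiable a g x \<Longrightarrow> partially_differentiable a h x \<Longrightarrow>
   partially_differentiable a (\<lambda>y. g y - h y) x"
  by (rule partially_differentiableI, rule DERIV_diff; rule has_field_derivative_pd)

lemma pd_diff [simp]:
  "partially_differentiable a g x \<Longrightarrow> partially_differentiable a h x \<Longrightarrow>
   pd a (\<lambda>y. g y - h y) x = pd a g x - pd a h x"
  by (rule pd_eqI, rule DERIV_diff; rule has_field_derivative_pd)

lemma partially_differentiable_mult [simp]:
  "partially_differentiable a g x \<Longrightarrow> partially_differentiable a h x \<Longrightarrow>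
   partially_differentiable a (\<lambda>y. g y * h y) x"
  by (rule partially_differentiableI, rule DERIV_mult; rule has_field_derivative_pd)

lemma pd_mult [simp]:
  assumes "partially_differentiable a g x" "partially_differentiable a h x"
  shows "pd a (\<lambda>y. g y * h y) x = pd a g x * h x + g x * pd a h x"
  using DERIV_mult[OF has_field_derivative_pd[OF assms(1)] has_field_derivative_pd[OF assms(2)]]
  by (intro pd_eqI) (simp add: algebra_simps)

lemma partially_differentiable_uminus [simp]:
  "partially_differentiable a g x \<Longrightarrow> partially_differentiable a (\<lambda>y. - g y) x"
  by (rule partially_differentiableI, rule DERIV_minus; rule has_field_derivative_pd)

lemma pd_uminus [simp]: "partially_differentiable a g x \<Longrightarrow> pd a (\<lambda>y. - g y) x = - pd a g x"
  by (rule pd_eqI, rule DERIV_minus; rule has_field_derivative_pd)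

lemma partially_differentiable_const [simp]: "partially_differentiable a (\<lambda>y. c) x"
  by (simp add: partially_differentiable_def)

lemma pd_const [simp]: "pd a (\<lambda>y. c) x = 0"
  by (simp add: pd_def)

lemma pd_if [simp]: "pd a (\<lambda>y. if P then g y else h y) x = (if P then pd a g x else pd a h x)"
  by simp

lemma partially_differentiable_if [simp]:
  "partially_differentiable a g x \<Longrightarrow> partially_differentiable a h x \<Longrightarrow>
   partially_differentiable a (\<lambda>y. if P then g y else h y) x"
  by (cases P) simp_all

lemma fun_upd_coord_line: "(\<lambda>t. \<phi> ((x(a := t)) j)) = (if a = j then \<phi> else (\<lambda>t. \<phi> (x j)))"
  by (auto simp: fun_eq_iff)

lemma partially_differentiable_coord [simp]: "partially_differentiable a (\<lambda>y. y j) x"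
  using fun_upd_coord_line[of "\<lambda>t. t" x a j] by (simp add: partially_differentiable_def)

lemma pd_coord [simp]: "pd a (\<lambda>y. y j) x = (if a = j then 1 else 0)"
  using fun_upd_coord_line[of "\<lambda>t. t" x a j] by (simp add: pd_def)

lemma partially_differentiable_comp_coord [simp]:
  "\<phi> field_differentiable (at (x j)) \<Longrightarrow> partially_differentiable a (\<lambda>y. \<phi> (y j)) x"
  using fun_upd_coord_line[of \<phi> x a j] by (simp add: partially_differentiable_def)

lemma pd_comp_coord [simp]:
  "\<phi> field_differentiable (at (x j)) \<Longrightarrow> pd a (\<lambda>y. \<phi> (y j)) x = (if a = j then deriv \<phi> (x j) else 0)"
  using fun_upd_coord_line[of \<phi> x a j] by (simp add: pd_def)

lemma sum_eq_sum_over_support: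
  assumes "finite A" "finite P" "\<And>h. h \<in> A \<Longrightarrow> h \<notin> P \<Longrightarrow> s h = 0"
  shows "sum s A = (\<Sum>h\<in>P. if h \<in> A then s h else 0)"
proof -
  have "sum s A = sum s (P \<inter> A)"
    by (rule sum.mono_neutral_right) (use assms in auto)
  also have "\<dots> = (\<Sum>h\<in>P. if h \<in> A then s h else 0)"
    using sum.inter_restrict[OF assms(2)] by simp
  finally show ?thesis .
qed

lemma inv_metric_eqI:
  assumes right: "\<And>a c. a < N \<Longrightarrow> c < N \<Longrightarrow> (\<Sum>b<N. g x a b * h b c) = (if a = c then 1 else 0)"
    and left: "\<And>a c. a < N \<Longrightarrow> c < N \<Longrightarrow> (\<Sum>b<N. h a b * g x b c) = (if a = c then 1 else 0)"
    and outside: "\<And>a b. N \<le> a \<or> N \<le> b \<Longrightarrow> h a b = 0"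
  shows "inv_metric N g x = h"
  unfolding inv_metric_def
proof (rule the_equality)
  fix h'
  assume h': "(\<forall>a<N. \<forall>c<N. (\<Sum>b<N. g x a b * h' b c) = (if a = c then 1 else 0))
    \<and> (\<forall>a b. N \<le> a \<or> N \<le> b \<longrightarrow> h' a b = 0)"
  show "h' = h"
  proof (intro ext)
    fix a c
    show "h' a c = h a c"
    proof (cases "a < N \<and> c < N")
      case False
      then show ?thesis using h' outside by auto
    next
      case True
      \<comment> \<open>uniqueness of inverses: \<open>h' = (h g) h' = h (g h')\<close>\<close>
      have "h' a c = (\<Sum>d<N. if a = d then h' d c else 0)"
        using True by simp
      also have "\<dots> = (\<Sum>d<N. (\<Sum>b<N. h a b * g x b d) * h' d c)"
        using True by (intro sum.cong) (simp_all add: left)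
      also have "\<dots> = (\<Sum>b<N. h a b * (\<Sum>d<N. g x b d * h' d c))"
        by (simp add: sum_distrib_left sum_distrib_right mult.assoc) (rule sum.swap)
      also have "\<dots> = (\<Sum>b<N. if b = c then h a b else 0)"
        using True h' by (intro sum.cong) auto
      also have "\<dots> = h a c"
        using True by simp
      finally show ?thesis .
    qed
  qed
qed (use right outside in blast)

datatype coord = U nat | V nat | S nat

locale gF_metric =
  fixes k :: nat and eps :: "nat \<Rightarrow> real" and f :: "nat \<Rightarrow> real \<Rightarrow> real"
  assumes eps_sign: "\<And>i. eps i = 1 \<or> eps i = -1"
    and f_differentiable [simp]: "\<And>i u. f i field_differentiable (at u)"
    and deriv_f_differentiable [simp]: "\<And>i u. deriv (f i) field_differentiable (at u)"
begin

lemma eps_mult_self [simp]: "eps i * eps i = 1" "eps i * (eps i * z) = z"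
  using eps_sign[of i] by auto

lemma gF_eq: "gF k eps f x a b =
     (if a = 0 \<and> 1 \<le> b \<and> b \<le> k then 2 * f b (x b) * x (2*k+1+b)
      else if b = 0 \<and> 1 \<le> a \<and> a \<le> k then 2 * f a (x a) * x (2*k+1+a)
      else if a = b \<and> 1 \<le> a \<and> a \<le> k then - 2 * x 0 * x (2*k+1+a)
      else if a \<le> k \<and> b = k+1+a then 1
      else if b \<le> k \<and> a = k+1+b then 1
      else if a = b \<and> 2 * k + 2 \<le> a \<and> a \<le> 3 * k + 1 then eps (a - (2 * k + 1))
      else 0)"
  by (simp add: gF_def uidx_def vidx_def sidx_def)

lemma gF_sym: "gF k eps f x a b = gF k eps f x b a"
  unfolding gF_eq by auto

text \<open>In the ordered basis \<open>(u, v, s)\<close> the metric has the block form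
  \<open>[[A, I, 0], [I, 0, 0], [0, 0, E]]\<close>, whose inverse is \<open>[[0, I, 0], [I, -A, 0], [0, 0, E]]\<close>.\<close>
definition gF_inv :: "(nat \<Rightarrow> real) \<Rightarrow> nat \<Rightarrow> nat \<Rightarrow> real" where
  "gF_inv x a b =
     (if a \<le> k \<and> b = k+1+a then 1
      else if b \<le> k \<and> a = k+1+b then 1
      else if k+1 \<le> a \<and> a \<le> 2*k+1 \<and> k+1 \<le> b \<and> b \<le> 2*k+1 then - gF k eps f x (a-(k+1)) (b-(k+1))
      else if a = b \<and> 2*k+2 \<le> a \<and> a \<le> 3*k+1 then eps (a - (2*k+1))
      else 0)"

lemma gF_inv_sym: "gF_inv x a b = gF_inv x b a"
  unfolding gF_inv_def using gF_sym by auto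

lemma gF_mult_gF_inv:
  assumes "a < 3*k+2" "c < 3*k+2"
  shows "(\<Sum>b<3*k+2. gF k eps f x a b * gF_inv x b c) = (if a = c then 1 else 0)"
proof -
  consider "a \<le> k" | "k+1 \<le> a \<and> a \<le> 2*k+1" | "2*k+2 \<le> a" by linarith
  then show ?thesis
  proof cases
    case 1
    have "(\<Sum>b<3*k+2. gF k eps f x a b * gF_inv x b c) =
       (\<Sum>b\<in>{c-(k+1), k+1+a}. if b \<in> {..<3*k+2} then gF k eps f x a b * gF_inv x b c else 0)"
      by (rule sum_eq_sum_over_support) (use 1 in \<open>auto simp: gF_eq gF_inv_def\<close>)
    then show ?thesis
      using 1 assms by (auto simp: gF_eq gF_inv_def sum.insert_if)
  next
    case 2
    have "(\<Sum>b<3*k+2. gF k eps f x a b * gF_inv x b c) =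
       (\<Sum>b\<in>{a-(k+1)}. if b \<in> {..<3*k+2} then gF k eps f x a b * gF_inv x b c else 0)"
      by (rule sum_eq_sum_over_support) (use 2 in \<open>auto simp: gF_eq gF_inv_def\<close>)
    then show ?thesis
      using 2 assms by (auto simp: gF_eq gF_inv_def)
  next
    case 3
    have "(\<Sum>b<3*k+2. gF k eps f x a b * gF_inv x b c) =
       (\<Sum>b\<in>{a}. if b \<in> {..<3*k+2} then gF k eps f x a b * gF_inv x b c else 0)"
      by (rule sum_eq_sum_over_support) (use 3 in \<open>auto simp: gF_eq gF_inv_def\<close>)
    then show ?thesis
      using 3 assms by (auto simp: gF_eq gF_inv_def)
  qed
qed

lemma gF_inv_outside: "3*k+2 \<le> a \<or> 3*k+2 \<le> b \<Longrightarrow> gF_inv x a b = 0"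
  unfolding gF_inv_def by auto

lemma inv_metric_gF: "inv_metric (3*k+2) (gF k eps f) x = gF_inv x"
proof (rule inv_metric_eqI)
  show "(\<Sum>b<3*k+2. gF_inv x a b * gF k eps f x b c) = (if a = c then 1 else 0)"
    if "a < 3*k+2" "c < 3*k+2" for a c
  proof -
    have "(\<Sum>b<3*k+2. gF_inv x a b * gF k eps f x b c) = (\<Sum>b<3*k+2. gF k eps f x c b * gF_inv x b a)"
      by (intro sum.cong refl) (simp only: gF_inv_sym[of x a] gF_sym[of x _ c] mult.commute)
    then show ?thesis
      using gF_mult_gF_inv[OF that(2,1)] by simp
  qed
qed (blast intro: gF_mult_gF_inv gF_inv_outside)+


fun idx :: "coord \<Rightarrow> nat" where
  "idx (U i) = i" | "idx (V j) = k+1+j" | "idx (S i) = 2*k+1+i"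

declare idx.simps [simp del]

fun valid :: "coord \<Rightarrow> bool" where
  "valid (U i) = (i \<le> k)" | "valid (V j) = (j \<le> k)" | "valid (S i) = (1 \<le> i \<and> i \<le> k)"

lemma idx_eq_iff [simp]: "valid a \<Longrightarrow> valid b \<Longrightarrow> idx a = idx b \<longleftrightarrow> a = b"
  by (cases a; cases b) (auto simp: idx.simps)

lemma bij_betw_idx: "bij_betw idx {a. valid a} {..<3*k+2}"
proof (rule bij_betw_imageI)
  show "inj_on idx {a. valid a}"
    by (rule inj_onI) simp
  have "n \<in> idx ` {a. valid a}" if "n < 3*k+2" for n
  proof -
    consider "n \<le> k" | "k < n \<and> n \<le> 2*k+1" | "2*k+1 < n" by linarith
    then show ?thesis
    proof cases
      case 1
      then show ?thesis by (intro image_eqI[of _ _ "U n"]) (auto simp: idx.simps)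
    next
      case 2
      then show ?thesis by (intro image_eqI[of _ _ "V (n - (k+1))"]) (auto simp: idx.simps)
    next
      case 3
      then show ?thesis using that by (intro image_eqI[of _ _ "S (n - (2*k+1))"]) (auto simp: idx.simps)
    qed
  qed
  moreover have "idx a < 3*k+2" if "valid a" for a
    using that by (cases a) (auto simp: idx.simps)
  ultimately show "idx ` {a. valid a} = {..<3*k+2}"
    by auto
qed

lemma finite_valid [simp]: "finite {a. valid a}"
  using bij_betw_finite[OF bij_betw_idx] by simp

lemma sum_idx: "(\<Sum>n<3*k+2. F n) = (\<Sum>a | valid a. F (idx a))"
  using sum.reindex_bij_betw[OF bij_betw_idx, of F] by simp

lemma sum_valid:
  "(\<Sum>h | valid h. s h) = (\<Sum>i\<le>k. s (U i)) + (\<Sum>j\<le>k. s (V j)) + (\<Sum>i\<in>{1..k}. s (S i))"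
proof -
  have valid_eq: "{h. valid h} = (U ` {..k} \<union> V ` {..k}) \<union> S ` {1..k}"
    by (auto elim: valid.elims)
  have "(\<Sum>h | valid h. s h) = sum s (U ` {..k} \<union> V ` {..k}) + sum s (S ` {1..k})"
    unfolding valid_eq by (rule sum.union_disjoint) auto
  also have "sum s (U ` {..k} \<union> V ` {..k}) = sum s (U ` {..k}) + sum s (V ` {..k})"
    by (rule sum.union_disjoint) auto
  finally show ?thesis
    by (simp add: sum.reindex inj_on_def)
qed

fun g_coord :: "(nat \<Rightarrow> real) \<Rightarrow> coord \<Rightarrow> coord \<Rightarrow> real" where
  "g_coord y (U i) (U j) =
     (if i = 0 \<and> j \<noteq> 0 then 2 * f j (y (idx (U j))) * y (idx (S j))
      else if j = 0 \<and> i \<noteq> 0 then 2 * f i (y (idx (U i))) * y (idx (S i))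
      else if i = j \<and> i \<noteq> 0 then - 2 * y (idx (U 0)) * y (idx (S i)) else 0)"
| "g_coord y (U i) (V j) = (if i = j then 1 else 0)"
| "g_coord y (V i) (U j) = (if i = j then 1 else 0)"
| "g_coord y (S i) (S j) = (if i = j then eps i else 0)"
| "g_coord y _ _ = 0"

lemma gF_idx: "valid a \<Longrightarrow> valid b \<Longrightarrow> gF k eps f y (idx a) (idx b) = g_coord y a b"
  by (cases a; cases b) (auto simp: gF_eq idx.simps)

fun g_inv_coord :: "(nat \<Rightarrow> real) \<Rightarrow> coord \<Rightarrow> coord \<Rightarrow> real" where
  "g_inv_coord y (U i) (V j) = (if i = j then 1 else 0)"
| "g_inv_coord y (V i) (U j) = (if i = j then 1 else 0)"
| "g_inv_coord y (V i) (V j) = - g_coord y (U i) (U j)"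
| "g_inv_coord y (S i) (S j) = (if i = j then eps i else 0)"
| "g_inv_coord y _ _ = 0"

lemma gF_inv_idx: "valid a \<Longrightarrow> valid b \<Longrightarrow> gF_inv x (idx a) (idx b) = g_inv_coord x a b"
proof (cases a; cases b)
  fix i j
  assume "a = V i" "b = V j" "valid a" "valid b"
  then show ?thesis
    using gF_idx[of "U i" "U j" x] by (auto simp: gF_inv_def idx.simps)
qed (auto simp: gF_inv_def idx.simps)

fun dg_coord :: "(nat \<Rightarrow> real) \<Rightarrow> coord \<Rightarrow> coord \<Rightarrow> coord \<Rightarrow> real" where
  "dg_coord x e (U i) (U j) =
     (if i = 0 \<and> j \<noteq> 0 then
        2 * (if e = U j then deriv (f j) (x (idx (U j))) else 0) * x (idx (S j))
        + 2 * f j (x (idx (U j))) * (if e = S j then 1 else 0)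
      else if j = 0 \<and> i \<noteq> 0 then
        2 * (if e = U i then deriv (f i) (x (idx (U i))) else 0) * x (idx (S i))
        + 2 * f i (x (idx (U i))) * (if e = S i then 1 else 0)
      else if i = j \<and> i \<noteq> 0 then
        - 2 * ((if e = U 0 then 1 else 0) * x (idx (S i)) + x (idx (U 0)) * (if e = S i then 1 else 0))
      else 0)"
| "dg_coord x e _ _ = 0"

lemma pd_gF_idx:
  assumes "valid e" "valid a" "valid b"
  shows "pd (idx e) (\<lambda>y. gF k eps f y (idx a) (idx b)) x = dg_coord x e a b"
proof -
  have "(\<lambda>y. gF k eps f y (idx a) (idx b)) = (\<lambda>y. g_coord y a b)"
    using assms by (simp add: gF_idx)
  then show ?thesis
    using assms by (cases a; cases b) (auto simp: algebra_simps)
qed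

fun christoffel1_coord :: "(nat \<Rightarrow> real) \<Rightarrow> coord \<Rightarrow> coord \<Rightarrow> coord \<Rightarrow> real" where
  "christoffel1_coord y (U i) (U j) (U l) =
     (if i = 0 \<and> j \<noteq> 0 \<and> l = j then - y (idx (S j))
      else if j = 0 \<and> i \<noteq> 0 \<and> l = i then - y (idx (S i))
      else if i = j \<and> i \<noteq> 0 \<and> l = 0 then y (idx (S i)) * (2 * deriv (f i) (y (idx (U i))) + 1)
      else 0)"
| "christoffel1_coord y (U i) (U j) (S l) =
     (if i = 0 \<and> j = l then - f l (y (idx (U l)))
      else if j = 0 \<and> i = l then - f l (y (idx (U l)))
      else if i = j \<and> i = l then y (idx (U 0)) else 0)"
| "christoffel1_coord y (U i) (S j) (U l) =
     (if i = 0 \<and> l = j then f j (y (idx (U j)))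
      else if i = j \<and> l = 0 then f j (y (idx (U j)))
      else if i = j \<and> l = j then - y (idx (U 0)) else 0)"
| "christoffel1_coord y (S j) (U i) (U l) =
     (if i = 0 \<and> l = j then f j (y (idx (U j)))
      else if i = j \<and> l = 0 then f j (y (idx (U j)))
      else if i = j \<and> l = j then - y (idx (U 0)) else 0)"
| "christoffel1_coord y _ _ _ = 0"

lemma christoffel1_coord_eq:
  "valid a \<Longrightarrow> valid b \<Longrightarrow> valid d \<Longrightarrow>
   dg_coord x a b d + dg_coord x b a d - dg_coord x d a b = 2 * christoffel1_coord x a b d"
  by (cases a; cases b; cases d) (auto simp: algebra_simps)

lemma christoffel1_coord_V [simp]:
  "christoffel1_coord y a b (V m) = 0" "christoffel1_coord y a (V m) d = 0" "christoffel1_coord y (V m) b d = 0"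
  by (cases a; cases b; cases d; simp)+

definition christoffel_coord :: "(nat \<Rightarrow> real) \<Rightarrow> coord \<Rightarrow> coord \<Rightarrow> coord \<Rightarrow> real" where
  "christoffel_coord x c a b =
     (case c of U _ \<Rightarrow> 0 | V i \<Rightarrow> christoffel1_coord x a b (U i) | S i \<Rightarrow> eps i * christoffel1_coord x a b (S i))"

lemma christoffel_idx:
  assumes "valid c" "valid a" "valid b"
  shows "christoffel (3*k+2) (gF k eps f) x (idx c) (idx a) (idx b) = christoffel_coord x c a b"
proof -
  let ?s = "\<lambda>d. g_inv_coord x c d * (2 * christoffel1_coord x a b d)"
  have "christoffel (3*k+2) (gF k eps f) x (idx c) (idx a) (idx b) =
     (\<Sum>d | valid d. gF_inv x (idx c) (idx d) * (pd (idx a) (\<lambda>y. gF k eps f y (idx b) (idx d)) x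
        + pd (idx b) (\<lambda>y. gF k eps f y (idx a) (idx d)) x - pd (idx d) (\<lambda>y. gF k eps f y (idx a) (idx b)) x)) / 2"
    unfolding christoffel_def inv_metric_gF sum_idx ..
  also have "\<dots> = (\<Sum>d | valid d. ?s d) / 2"
    using assms by (intro arg_cong[where f="\<lambda>t. t / 2"] sum.cong refl)
      (simp add: pd_gF_idx gF_inv_idx christoffel1_coord_eq)
  also have "\<dots> = christoffel_coord x c a b"
    using assms by (cases c) (simp_all add: sum_valid christoffel_coord_def if_distrib[where f = "\<lambda>z. z * w" for w] cong: if_cong)
  finally show ?thesis .
qed


lemma sum_valid_support:
  "finite P \<Longrightarrow> (\<And>h. valid h \<Longrightarrow> h \<notin> P \<Longrightarrow> s h = 0) \<Longrightarrow>
   (\<Sum>h | valid h. s h) = (\<Sum>h\<in>P. if valid h then s h else 0)"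
  by (subst sum_eq_sum_over_support[of _ P]) auto

fun christoffel_contract :: "(nat \<Rightarrow> real) \<Rightarrow> coord \<Rightarrow> coord \<Rightarrow> (coord \<Rightarrow> real) \<Rightarrow> real" where
  "christoffel_contract x (U i) (U j) Q =
     (if i = 0 \<and> j \<noteq> 0 then - eps j * f j (x (idx (U j))) * Q (S j)
      else if j = 0 \<and> i \<noteq> 0 then - eps i * f i (x (idx (U i))) * Q (S i)
      else if i = j \<and> i \<noteq> 0 then eps i * x (idx (U 0)) * Q (S i) else 0)"
| "christoffel_contract x _ _ Q = 0"

lemma sum_christoffel_mult:
  assumes Q: "\<And>m. Q (V m) = 0" and "valid b" "valid c"
  shows "(\<Sum>e | valid e. christoffel_coord x e b c * Q e) = christoffel_contract x b c Q"
proof (cases "\<exists>i j. b = U i \<and> c = U j")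
  case True
  then obtain i j where ij: "b = U i" "c = U j" by blast
  have "(\<Sum>e | valid e. christoffel_coord x e b c * Q e) =
    (\<Sum>e\<in>{S (max i j)}. if valid e then christoffel_coord x e b c * Q e else 0)"
  proof (rule sum_valid_support)
    fix h show "valid h \<Longrightarrow> h \<notin> {S (max i j)} \<Longrightarrow> christoffel_coord x h b c * Q h = 0"
      by (cases h) (auto simp: ij christoffel_coord_def Q)
  qed simp
  then show ?thesis using assms by (auto simp: ij christoffel_coord_def max_def)
next
  case False
  have "(\<Sum>e | valid e. christoffel_coord x e b c * Q e) = 0"
  proof (rule sum.neutral, intro ballI)
    fix h show "christoffel_coord x h b c * Q h = 0"
      using False by (cases h; cases b; cases c) (auto simp: christoffel_coord_def Q)
  qed
  then show ?thesis using False by (cases b; cases c) auto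
qed

lemma christoffel_coord_V [simp]: "christoffel_coord x c a (V m) = 0"
  by (cases c) (auto simp: christoffel_coord_def)

lemma curv_up_idx_eq:
  assumes "valid a" "valid b" "valid c" "valid d"
  shows "curv_up (3*k+2) (gF k eps f) x (idx a) (idx b) (idx c) (idx d) =
    pd (idx a) (\<lambda>y. christoffel_coord y d b c) x - pd (idx b) (\<lambda>y. christoffel_coord y d a c) x
    + christoffel_contract x b c (\<lambda>e. christoffel_coord x d a e)
    - christoffel_contract x a c (\<lambda>e. christoffel_coord x d b e)"
proof -
  have "curv_up (3*k+2) (gF k eps f) x (idx a) (idx b) (idx c) (idx d) =
    pd (idx a) (\<lambda>y. christoffel_coord y d b c) x - pd (idx b) (\<lambda>y. christoffel_coord y d a c) x
    + (\<Sum>e | valid e. christoffel_coord x e b c * christoffel_coord x d a e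
                   - christoffel_coord x e a c * christoffel_coord x d b e)"
    unfolding curv_up_def sum_idx using assms
    by (intro arg_cong2[where f="(+)"] arg_cong2[where f="(-)"] sum.cong refl)
      (simp_all only: christoffel_idx mem_Collect_eq)
  then show ?thesis
    using assms by (simp add: sum_subtractf sum_christoffel_mult)
qed

fun curv_up_u0 :: "(nat \<Rightarrow> real) \<Rightarrow> nat \<Rightarrow> coord \<Rightarrow> coord \<Rightarrow> real" where
  "curv_up_u0 x i (U j) (V l) =
     (if j = i \<and> l = 0 then eps i * (f i (x (idx (U i))))\<^sup>2
      else if j = 0 \<and> l = i then - eps i * (f i (x (idx (U i))))\<^sup>2 else 0)"
| "curv_up_u0 x i (U j) (S l) = (if j = i \<and> l = i then eps i * (1 + deriv (f i) (x (idx (U i)))) else 0)"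
| "curv_up_u0 x i (S j) (V l) = (if j = i \<and> l = i then - (1 + deriv (f i) (x (idx (U i)))) else 0)"
| "curv_up_u0 x i _ _ = 0"

fun curv_up_s :: "(nat \<Rightarrow> real) \<Rightarrow> nat \<Rightarrow> coord \<Rightarrow> coord \<Rightarrow> real" where
  "curv_up_s x i (U j) (V l) =
     (if j = 0 \<and> l = i then 1 + deriv (f i) (x (idx (U i)))
      else if j = i \<and> l = 0 then - (1 + deriv (f i) (x (idx (U i)))) else 0)"
| "curv_up_s x i _ _ = 0"

fun curv_up_coord :: "(nat \<Rightarrow> real) \<Rightarrow> coord \<Rightarrow> coord \<Rightarrow> coord \<Rightarrow> coord \<Rightarrow> real" where
  "curv_up_coord x (U i) (U j) c d =
     (if i = 0 \<and> j \<noteq> 0 then curv_up_u0 x j c d else if j = 0 \<and> i \<noteq> 0 then - curv_up_u0 x i c d else 0)"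
| "curv_up_coord x (U i) (S j) c d = (if i = j then curv_up_s x j c d else 0)"
| "curv_up_coord x (S j) (U i) c d = (if i = j then - curv_up_s x j c d else 0)"
| "curv_up_coord x _ _ c d = 0"

lemma curv_up_idx:
  "valid a \<Longrightarrow> valid b \<Longrightarrow> valid c \<Longrightarrow> valid d \<Longrightarrow>
   curv_up (3*k+2) (gF k eps f) x (idx a) (idx b) (idx c) (idx d) = curv_up_coord x a b c d"
  unfolding curv_up_idx_eq
  by (cases a; cases b; cases c; cases d) (auto simp: christoffel_coord_def algebra_simps power2_eq_square)

lemma curv_up_coord_U [simp]: "curv_up_coord x a b c (U m) = 0"
  by (cases a; cases b; cases c) auto

lemma sum_mult_g_coord:
  assumes Q: "\<And>m. Q (U m) = 0" and "valid d"
  shows "(\<Sum>h | valid h. Q h * g_coord x h d) = (case d of U l \<Rightarrow> Q (V l) | V l \<Rightarrow> 0 | S l \<Rightarrow> Q (S l) * eps l)"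
  using assms by (cases d) (simp_all add: sum_valid if_distrib[where f = "\<lambda>z. w * z" for w] cong: if_cong)

definition curv_coord :: "(nat \<Rightarrow> real) \<Rightarrow> coord \<Rightarrow> coord \<Rightarrow> coord \<Rightarrow> coord \<Rightarrow> real" where
  "curv_coord x a b c d =
     (case d of U l \<Rightarrow> curv_up_coord x a b c (V l) | V l \<Rightarrow> 0 | S l \<Rightarrow> curv_up_coord x a b c (S l) * eps l)"

lemma curv_idx:
  assumes "valid a" "valid b" "valid c" "valid d"
  shows "curv (3*k+2) (gF k eps f) x (idx a) (idx b) (idx c) (idx d) = curv_coord x a b c d"
proof -
  have "curv (3*k+2) (gF k eps f) x (idx a) (idx b) (idx c) (idx d) =
    (\<Sum>h | valid h. curv_up_coord x a b c h * g_coord x h d)"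
    unfolding curv_def sum_idx using assms
    by (intro sum.cong refl) (simp_all only: curv_up_idx gF_idx mem_Collect_eq)
  also have "\<dots> = curv_coord x a b c d"
    using assms by (simp add: sum_mult_g_coord curv_coord_def)
  finally show ?thesis .
qed

lemma curv_coord_V [simp]:
  "curv_coord x (V m) b c d = 0" "curv_coord x a (V m) c d = 0"
  "curv_coord x a b (V m) d = 0" "curv_coord x a b c (V m) = 0"
  by (cases a; cases b; cases c; cases d; simp add: curv_coord_def)+

lemma nabla_curv_idx_eq:
  assumes "valid e" "valid a" "valid b" "valid c" "valid d"
  shows "nabla_curv (3*k+2) (gF k eps f) x (idx e) (idx a) (idx b) (idx c) (idx d) =
    pd (idx e) (\<lambda>y. curv_coord y a b c d) x
    - (christoffel_contract x e a (\<lambda>h. curv_coord x h b c d) + christoffel_contract x e b (\<lambda>h. curv_coord x a h c d)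
     + christoffel_contract x e c (\<lambda>h. curv_coord x a b h d) + christoffel_contract x e d (\<lambda>h. curv_coord x a b c h))"
proof -
  have "nabla_curv (3*k+2) (gF k eps f) x (idx e) (idx a) (idx b) (idx c) (idx d) =
    pd (idx e) (\<lambda>y. curv_coord y a b c d) x
    - (\<Sum>h | valid h. christoffel_coord x h e a * curv_coord x h b c d + christoffel_coord x h e b * curv_coord x a h c d
       + christoffel_coord x h e c * curv_coord x a b h d + christoffel_coord x h e d * curv_coord x a b c h)"
    unfolding nabla_curv_def sum_idx using assms
    by (intro arg_cong2[where f="(-)"] sum.cong refl) (simp_all only: curv_idx christoffel_idx mem_Collect_eq)
  then show ?thesis
    using assms by (simp add: sum.distrib sum_christoffel_mult)
qed

fun wedge_u0_u :: "nat \<Rightarrow> coord \<Rightarrow> coord \<Rightarrow> real" where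
  "wedge_u0_u j (U i) (U l) = (if i = 0 \<and> l = j then 1 else if i = j \<and> l = 0 then -1 else 0)"
| "wedge_u0_u j _ _ = 0"

fun wedge_u_s :: "nat \<Rightarrow> coord \<Rightarrow> coord \<Rightarrow> real" where
  "wedge_u_s j (U i) (S l) = (if i = j \<and> l = j then 1 else 0)"
| "wedge_u_s j (S l) (U i) = (if i = j \<and> l = j then -1 else 0)"
| "wedge_u_s j _ _ = 0"

definition nabla_curv_coord :: "(nat \<Rightarrow> real) \<Rightarrow> coord \<Rightarrow> coord \<Rightarrow> coord \<Rightarrow> coord \<Rightarrow> coord \<Rightarrow> real" where
  "nabla_curv_coord x e a b c d =
     (case e of
        U j \<Rightarrow> if j = 0 then 0 else
          - 2 * eps j * f j (x (idx (U j))) * (1 + 2 * deriv (f j) (x (idx (U j)))) * wedge_u0_u j a b * wedge_u0_u j c d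
          + deriv (deriv (f j)) (x (idx (U j))) * (wedge_u0_u j a b * wedge_u_s j c d + wedge_u_s j a b * wedge_u0_u j c d)
      | _ \<Rightarrow> 0)"

lemma nabla_curv_idx:
  "valid e \<Longrightarrow> valid a \<Longrightarrow> valid b \<Longrightarrow> valid c \<Longrightarrow> valid d \<Longrightarrow>
   nabla_curv (3*k+2) (gF k eps f) x (idx e) (idx a) (idx b) (idx c) (idx d) = nabla_curv_coord x e a b c d"
  unfolding nabla_curv_idx_eq
  by (cases e; cases a; cases b; cases c; cases d)
    (auto simp: curv_coord_def nabla_curv_coord_def algebra_simps power2_eq_square)


lemma locally_symmetric_iff_nabla_curv_coord:
  "locally_symmetric (3*k+2) (gF k eps f) \<longleftrightarrow>
   (\<forall>x e a b c d. valid e \<and> valid a \<and> valid b \<and> valid c \<and> valid d \<longrightarrow> nabla_curv_coord x e a b c d = 0)"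
proof -
  have idx_range: "n < 3*k+2 \<longleftrightarrow> (\<exists>a. valid a \<and> n = idx a)" for n
    using bij_betw_idx unfolding bij_betw_def by auto
  have "locally_symmetric (3*k+2) (gF k eps f) \<longleftrightarrow>
    (\<forall>x e a b c d. valid e \<and> valid a \<and> valid b \<and> valid c \<and> valid d \<longrightarrow>
       nabla_curv (3*k+2) (gF k eps f) x (idx e) (idx a) (idx b) (idx c) (idx d) = 0)"
    unfolding locally_symmetric_def idx_range by blast
  then show ?thesis
    using nabla_curv_idx by auto
qed

lemma locally_symmetric_iff:
  "locally_symmetric (3*k+2) (gF k eps f) \<longleftrightarrow>
   (\<forall>i\<in>{1..k}. \<forall>u. f i u * (1 + 2 * deriv (f i) u) = 0 \<and> deriv (deriv (f i)) u = 0)"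
proof
  assume "locally_symmetric (3*k+2) (gF k eps f)"
  then have nabla_curv_0: "nabla_curv_coord (\<lambda>_. u) (U i) a b c d = 0"
    if "i \<in> {1..k}" "valid a" "valid b" "valid c" "valid d" for i u a b c d
    using that unfolding locally_symmetric_iff_nabla_curv_coord by auto
  show "\<forall>i\<in>{1..k}. \<forall>u. f i u * (1 + 2 * deriv (f i) u) = 0 \<and> deriv (deriv (f i)) u = 0"
  proof (intro ballI allI conjI)
    fix i u
    assume i: "i \<in> {1..k}"
    have "eps i * (f i u * (1 + 2 * deriv (f i) u)) = 0"
      using nabla_curv_0[OF i, of "U 0" "U i" "U i" "U 0" u] i by (simp add: nabla_curv_coord_def)
    then show "f i u * (1 + 2 * deriv (f i) u) = 0"
      using eps_sign[of i] by auto
    show "deriv (deriv (f i)) u = 0"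
      using nabla_curv_0[OF i, of "U 0" "U i" "U i" "S i" u] i by (simp add: nabla_curv_coord_def)
  qed
next
  assume "\<forall>i\<in>{1..k}. \<forall>u. f i u * (1 + 2 * deriv (f i) u) = 0 \<and> deriv (deriv (f i)) u = 0"
  then have "nabla_curv_coord x e a b c d = 0" if "valid e" for x e a b c d
    using that by (cases e) (auto simp: nabla_curv_coord_def)
  then show "locally_symmetric (3*k+2) (gF k eps f)"
    unfolding locally_symmetric_iff_nabla_curv_coord by blast
qed

end

lemma deriv_values_if_zero_or_deriv_eq:
  fixes g :: "real \<Rightarrow> real"
  assumes "\<And>u. g field_differentiable (at u)" "\<And>u. deriv g field_differentiable (at u)"
    and zero_or_deriv: "\<And>u. g u = 0 \<or> deriv g u = c"
  shows "deriv g u = 0 \<or> deriv g u = c"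
proof (cases "g u = 0")
  case True
  \<comment> \<open>\<open>g (g' - c)\<close> vanishes identically, so its derivative \<open>g' (g' - c) + g g''\<close> does too\<close>
  have "((\<lambda>t. g t * (deriv g t - c)) has_real_derivative
      deriv g u * (deriv g u - c) + g u * deriv (deriv g) u) (at u)"
    using assms(1,2) unfolding DERIV_deriv_iff_field_differentiable[symmetric]
    by (auto intro!: derivative_eq_intros)
  moreover have "(\<lambda>t. g t * (deriv g t - c)) = (\<lambda>t. 0)"
    using zero_or_deriv by (auto simp: fun_eq_iff)
  ultimately have "deriv g u * (deriv g u - c) + g u * deriv (deriv g) u = 0"
    using DERIV_const DERIV_unique by metis
  then show ?thesis
    using True by simp
qed (use zero_or_deriv in auto)

lemma deriv2_eq_0_if_zero_or_deriv_eq: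
  fixes g :: "real \<Rightarrow> real"
  assumes "\<And>u. g field_differentiable (at u)" "\<And>u. deriv g field_differentiable (at u)"
    and "\<And>u. g u = 0 \<or> deriv g u = c"
  shows "deriv (deriv g) u = 0"
proof -
  have "continuous_on UNIV (deriv g)"
    using assms(2) by (simp add: continuous_at_imp_continuous_on field_differentiable_imp_continuous_at)
  moreover have "finite (range (deriv g))"
    using deriv_values_if_zero_or_deriv_eq[OF assms] by (auto intro: finite_subset[of _ "{0, c}"])
  ultimately obtain a where "\<forall>v. deriv g v = a"
    using continuous_finite_range_constant[of UNIV "deriv g"] by (auto simp: constant_on_def)
  then have "deriv g = (\<lambda>_. a)"
    by auto
  then show ?thesis
    by simp
qed

lemma smooth_fun_field_differentiable:
  assumes "smooth_fun h"
  shows "h field_differentiable (at u)" "deriv h field_differentiable (at u)"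
  using assms[unfolded smooth_fun_def, rule_format, of 0 u] assms[unfolded smooth_fun_def, rule_format, of 1 u]
  by (simp_all add: field_differentiable_def real_differentiable_def)

theorem lemma2p1:
  fixes k :: nat and eps :: "nat \<Rightarrow> real" and f :: "nat \<Rightarrow> real \<Rightarrow> real"
  assumes "k \<ge> 1"
    and "\<forall>i\<in>{1..k}. eps i = 1 \<or> eps i = -1"
    and "\<forall>i\<in>{1..k}. smooth_fun (f i)"
  shows "locally_symmetric (3 * k + 2) (gF k eps f) \<longleftrightarrow>
         (\<forall>i\<in>{1..k}. \<forall>u. f i u = 0 \<or> deriv (f i) u = - 1 / 2)"
proof -
  \<comment> \<open>the locale wants its hypotheses for every index, but \<open>g\<^sub>F\<close> only sees \<open>i \<in> {1..k}\<close>\<close>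
  define f' where "f' i = (if i \<in> {1..k} then f i else (\<lambda>_. 0))" for i
  define eps' where "eps' i = (if i \<in> {1..k} then eps i else 1)" for i
  have gF_cutoff: "gF k eps f = gF k eps' f'"
    by (auto simp: fun_eq_iff gF_def f'_def eps'_def uidx_def vidx_def sidx_def)
  have smooth: "f i field_differentiable (at u)" "deriv (f i) field_differentiable (at u)"
    if "i \<in> {1..k}" for i u
    using smooth_fun_field_differentiable assms(3) that by blast+
  interpret gF_metric k eps' f'
    by unfold_locales (use assms(2) smooth in \<open>auto simp: eps'_def f'_def\<close>)
  have "locally_symmetric (3 * k + 2) (gF k eps f) \<longleftrightarrow>
      (\<forall>i\<in>{1..k}. \<forall>u. f i u * (1 + 2 * deriv (f i) u) = 0 \<and> deriv (deriv (f i)) u = 0)"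
    unfolding gF_cutoff locally_symmetric_iff by (simp add: f'_def)
  also have "\<dots> \<longleftrightarrow> (\<forall>i\<in>{1..k}. \<forall>u. f i u = 0 \<or> deriv (f i) u = - 1 / 2)"
  proof (rule ball_cong[OF refl])
    fix i
    assume i: "i \<in> {1..k}"
    show "(\<forall>u. f i u * (1 + 2 * deriv (f i) u) = 0 \<and> deriv (deriv (f i)) u = 0) \<longleftrightarrow>
        (\<forall>u. f i u = 0 \<or> deriv (f i) u = - 1 / 2)"
      using deriv2_eq_0_if_zero_or_deriv_eq[OF smooth[OF i], of "- 1 / 2"] by auto
  qed
  finally show ?thesis .
qed

end
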